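(* Let $L_i \ge 1$ be an integer and, for each $\ell \in \{1,\dots,L_i\}$, let $K_\ell \ge 1$ be an integer. For each $\ell$ and each $k \in \{1,\dots,K_\ell\}$ let $\mathbf{c}_{\ell k} \in \mathbb{R}^{d_c}$ (codebook centers) and $\mathbf{o}_{i,\ell k} \in \mathbb{R}^{d_c}$ (capsule outputs) be vectors, and let $c^{(T)}_{i,\ell k} \ge 0$ be routing weights with $\sum_{k=1}^{K_\ell} c^{(T)}_{i,\ell k} = 1$ for each $\ell$. Let $s_{i,\ell} \in \arg\max_k c^{(T)}_{i,\ell k}$. Define $$\hat{\mathbf{x}}^{\mathrm{hard}}_i = \sum_{\ell=1}^{L_i} \mathbf{c}_{\ell s_{i,\ell}}, \qquad \hat{\mathbf{x}}^{\mathrm{soft}}_i = \sum_{\ell=1}^{L_i}\sum_{k=1}^{K_\ell} c^{(T)}_{i,\ell k}\,\mathbf{o}_{i,\ell k}.$$ Assume there are constants $\delta \ge 0$ and $C \ge 0$ with $\|\mathbf{o}_{i,\ell k} - \mathbf{c}_{\ell k}\|_2 \le \delta$ and $\|\mathbf{c}_{\ell k}\|_2 \le C$ for all $\ell, k$. Then $$\big\|\hat{\mathbf{x}}^{\mathrm{soft}}_i - \hat{\mathbf{x}}^{\mathrm{hard}}_i\big\|_2 \le L_i\delta + 2C\sum_{\ell=1}^{L_i}\big(1 - c^{(T)}_{i,\ell s_{i,\ell}}\big),$$ and consequently, for any vector $\mathbf{x}_i \in \mathbb{R}^{d_c}$, $$\big\|\mathbf{x}_i - \hat{\mathbf{x}}^{\mathrm{soft}}_i\big\|_2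 \le \big\|\mathbf{x}_i - \hat{\mathbf{x}}^{\mathrm{hard}}_i\big\|_2 + L_i\delta + 2C\sum_{\ell=1}^{L_i}\big(1 - c^{(T)}_{i,\ell s_{i,\ell}}\big).$$
   Context: In the paper's setting, $c^{(T)}_{i,\ell k}$ are the softmax routing weights of item $i$ over capsules $k$ at SID depth $\ell$ after $T$ routing iterations, $s_{i,\ell}$ is the emitted (argmax) token, $\mathbf{o}_{i,\ell k}$ is the squashed vote of capsule $k$, and $\mathbf{c}_{\ell k}$ is the codebook center of capsule $k$ at depth $\ell$; $\mathbf{x}_i$ is the item embedding, regarded as lying in the same space as the reconstructions. Only the properties listed in the claim are used. *)

theory Defs
  imports "HOL-Analysis.Analysis"
begin

end

theory Submission
  imports Defs
begin

(* At each depth the soft reconstruction differs from the hard one by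
   \<Sum>k w_k (o_k - c_k) + \<Sum>k w_k (c_k - c_s).  The first sum is at most \<delta>, being a
   convex combination of vectors of norm at most \<delta>; in the second the term k = s
   vanishes and the others have norm at most 2C, so it is at most 2C (1 - w_s).
   Summing over the depths and a triangle inequality give both claims. *)

lemma norm_sum_scaleR_le:
  fixes v :: "'b \<Rightarrow> 'a::real_normed_vector"
  assumes "\<And>k. k \<in> A \<Longrightarrow> w k \<ge> 0" and "\<And>k. k \<in> A \<Longrightarrow> norm (v k) \<le> B"
  shows "norm (\<Sum>k\<in>A. w k *\<^sub>R v k) \<le> sum w A * B"
proof -
  have "norm (\<Sum>k\<in>A. w k *\<^sub>R v k) \<le> (\<Sum>k\<in>A. w k * B)"
    using assms by (intro sum_norm_le) (simp add: mult_left_mono)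
  then show ?thesis
    by (simp add: sum_distrib_right)
qed

lemma norm_convex_comb_sub_le:
  fixes u c :: "'b \<Rightarrow> 'a::real_normed_vector"
  assumes fin: "finite A" and s_in: "s \<in> A"
    and w_nonneg: "\<And>k. k \<in> A \<Longrightarrow> w k \<ge> 0" and w_sum: "sum w A = 1"
    and u_close: "\<And>k. k \<in> A \<Longrightarrow> norm (u k - c k) \<le> \<delta>"
    and c_bound: "\<And>k. k \<in> A \<Longrightarrow> norm (c k) \<le> C"
  shows "norm ((\<Sum>k\<in>A. w k *\<^sub>R u k) - c s) \<le> \<delta> + 2 * C * (1 - w s)"
proof -
  have w_sum_rest: "sum w (A - {s}) = 1 - w s"
    using fin s_in w_sum by (simp add: sum_diff1)
  have "c s = (\<Sum>k\<in>A. w k *\<^sub>R c s)"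
    using w_sum by (simp add: scaleR_sum_left[symmetric])
  then have "(\<Sum>k\<in>A. w k *\<^sub>R u k) - c s
      = (\<Sum>k\<in>A. w k *\<^sub>R (u k - c k)) + (\<Sum>k\<in>A. w k *\<^sub>R (c k - c s))"
    by (simp add: scaleR_diff_right sum_subtractf)
  also have "(\<Sum>k\<in>A. w k *\<^sub>R (c k - c s)) = (\<Sum>k\<in>A - {s}. w k *\<^sub>R (c k - c s))"
    using fin s_in by (simp add: sum.remove)
  finally have split: "(\<Sum>k\<in>A. w k *\<^sub>R u k) - c s
      = (\<Sum>k\<in>A. w k *\<^sub>R (u k - c k)) + (\<Sum>k\<in>A - {s}. w k *\<^sub>R (c k - c s))" .
  have "norm (\<Sum>k\<in>A. w k *\<^sub>R (u k - c k)) \<le> sum w A * \<delta>"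
    using w_nonneg u_close by (rule norm_sum_scaleR_le)
  moreover have "norm (\<Sum>k\<in>A - {s}. w k *\<^sub>R (c k - c s)) \<le> sum w (A - {s}) * (2 * C)"
  proof (rule norm_sum_scaleR_le)
    fix k assume "k \<in> A - {s}"
    then have "norm (c k - c s) \<le> norm (c k) + norm (c s)" and "norm (c k) \<le> C"
      by (auto intro: norm_triangle_ineq4 c_bound)
    then show "norm (c k - c s) \<le> 2 * C"
      using c_bound[OF s_in] by linarith
  qed (use w_nonneg in auto)
  moreover note norm_triangle_ineq[of "\<Sum>k\<in>A. w k *\<^sub>R (u k - c k)"
      "\<Sum>k\<in>A - {s}. w k *\<^sub>R (c k - c s)"]
  ultimately show ?thesis
    unfolding split w_sum w_sum_rest by (simp add: algebra_simps)
qed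

theorem proposition1:
  fixes L :: nat and K :: "nat \<Rightarrow> nat"
    and cen out :: "nat \<Rightarrow> nat \<Rightarrow> real ^ 'd"
    and w :: "nat \<Rightarrow> nat \<Rightarrow> real"
    and s :: "nat \<Rightarrow> nat"
    and \<delta> C :: real
  assumes L_pos: "L \<ge> 1"
    and K_pos: "\<And>l. l \<in> {1..L} \<Longrightarrow> K l \<ge> 1"
    and w_nonneg: "\<And>l k. l \<in> {1..L} \<Longrightarrow> k \<in> {1..K l} \<Longrightarrow> w l k \<ge> 0"
    and w_sum: "\<And>l. l \<in> {1..L} \<Longrightarrow> (\<Sum>k=1..K l. w l k) = 1"
    and s_range: "\<And>l. l \<in> {1..L} \<Longrightarrow> s l \<in> {1..K l}"
    and s_argmax: "\<And>l k. l \<in> {1..L} \<Longrightarrow> k \<in> {1..K l} \<Longrightarrow> w l k \<le> w l (s l)"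
    and \<delta>_nonneg: "\<delta> \<ge> 0" and C_nonneg: "C \<ge> 0"
    and out_close: "\<And>l k. l \<in> {1..L} \<Longrightarrow> k \<in> {1..K l} \<Longrightarrow> norm (out l k - cen l k) \<le> \<delta>"
    and cen_bound: "\<And>l k. l \<in> {1..L} \<Longrightarrow> k \<in> {1..K l} \<Longrightarrow> norm (cen l k) \<le> C"
  defines "x_hard \<equiv> (\<Sum>l=1..L. cen l (s l))"
    and "x_soft \<equiv> (\<Sum>l=1..L. \<Sum>k=1..K l. w l k *\<^sub>R out l k)"
  shows "norm (x_soft - x_hard) \<le> real L * \<delta> + 2 * C * (\<Sum>l=1..L. 1 - w l (s l))
       \<and> (\<forall>x :: real ^ 'd. norm (x - x_soft)
            \<le> norm (x - x_hard) + real L * \<delta> + 2 * C * (\<Sum>l=1..L. 1 - w l (s l)))"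
proof -
  have layer: "norm ((\<Sum>k=1..K l. w l k *\<^sub>R out l k) - cen l (s l)) \<le> \<delta> + 2 * C * (1 - w l (s l))"
    if "l \<in> {1..L}" for l
    using that by (intro norm_convex_comb_sub_le s_range w_nonneg w_sum out_close cen_bound) auto
  have "norm (x_soft - x_hard)
      = norm (\<Sum>l=1..L. (\<Sum>k=1..K l. w l k *\<^sub>R out l k) - cen l (s l))"
    unfolding x_soft_def x_hard_def by (simp add: sum_subtractf)
  also have "\<dots> \<le> (\<Sum>l=1..L. \<delta> + 2 * C * (1 - w l (s l)))"
    by (rule sum_norm_le) (rule layer)
  also have "\<dots> = real L * \<delta> + 2 * C * (\<Sum>l=1..L. 1 - w l (s l))"
    by (simp add: sum.distrib sum_distrib_left)
  finally have soft_hard: "norm (x_soft - x_hard) \<le> real L * \<delta> + 2 * C * (\<Sum>l=1..L. 1 - w l (s l))" .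
  moreover have "norm (x - x_soft) \<le> norm (x - x_hard) + norm (x_soft - x_hard)" for x :: "real ^ 'd"
    using norm_triangle_ineq4[of "x - x_hard" "x_soft - x_hard"] by simp
  ultimately show ?thesis
    by (simp add: add.assoc) (meson add_left_mono order_trans)
qed

end
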